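(* Let $\mathcal{G}$ be a hypergraph with at least one edge. Then $$\gamma(\mathcal{G})\ge 1-\frac{\lambda_{\max}(A_{\mathcal{G}})}{\lambda_{\min}(A_{\mathcal{G}})},$$ where $\lambda_{\max}(A_{\mathcal{G}})$ and $\lambda_{\min}(A_{\mathcal{G}})$ are the largest and smallest eigenvalues of $A_{\mathcal{G}}$.
   Context: A hypergraph $\mathcal{G}=(V,E)$ has a finite vertex set $V$ and a set $E$ of subsets of $V$ (edges), each of cardinality at least $2$. Two distinct vertices are adjacent if some edge contains both. The adjacency matrix $A_{\mathcal{G}}$ has $(A_{\mathcal{G}})_{ij}=\sum_{e\in E,\, i,j\in e}\frac{1}{|e|-1}$ for $i\ne j$ and zero diagonal. The strong chromatic number $\gamma(\mathcal{G})$ is the minimum number of colors in a coloring of the vertices in which any two adjacent vertices get different colors. *)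

theory Defs
  imports "Jordan_Normal_Form.Char_Poly"
begin

definition hypergraph :: "nat \<Rightarrow> nat set set \<Rightarrow> bool" where
  "hypergraph n E \<longleftrightarrow> (\<forall>e\<in>E. e \<subseteq> {..<n} \<and> card e \<ge> 2)"

definition hg_adjacent :: "nat set set \<Rightarrow> nat \<Rightarrow> nat \<Rightarrow> bool" where
  "hg_adjacent E i j \<longleftrightarrow> i \<noteq> j \<and> (\<exists>e\<in>E. i \<in> e \<and> j \<in> e)"

definition hg_adj_matrix :: "nat \<Rightarrow> nat set set \<Rightarrow> real mat" where
  "hg_adj_matrix n E = mat n n (\<lambda>(i, j). if i = j then 0
      else (\<Sum>e\<in>{e\<in>E. i \<in> e \<and> j \<in> e}. 1 / (real (card e) - 1)))"

definition strong_chromatic_number :: "nat \<Rightarrow> nat set set \<Rightarrow> nat" where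
  "strong_chromatic_number n E = (LEAST k. \<exists>c :: nat \<Rightarrow> nat.
      (\<forall>i<n. c i < k) \<and> (\<forall>i<n. \<forall>j<n. hg_adjacent E i j \<longrightarrow> c i \<noteq> c j))"

definition lambda_max :: "real mat \<Rightarrow> real" where
  "lambda_max A = Max {k. eigenvalue A k}"

definition lambda_min :: "real mat \<Rightarrow> real" where
  "lambda_min A = Min {k. eigenvalue A k}"

end

theory Submission
  imports Defs "HOL-Analysis.Function_Topology" "Jordan_Normal_Form.Spectral_Radius"
begin

text \<open>This is Hoffman's bound. Let \<open>\<mu>\<close> be the least eigenvalue of the symmetric matrix \<open>A\<close>,
  so that \<open>z\<^sup>T A z \<ge> \<mu> |z|\<^sup>2\<close> for all \<open>z\<close> (the Rayleigh quotient attains its minimum on the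
  compact unit sphere, and a minimiser is an eigenvector), and let \<open>x\<close> be an eigenvector for an eigenvalue
  \<open>l\<close>. Splitting \<open>z\<close> into its components along \<open>x\<close> and orthogonal to \<open>x\<close> sharpens the
  Rayleigh bound to \<open>z\<^sup>T A z - \<mu> |z|\<^sup>2 \<ge> (l - \<mu>) \<langle>z, x\<rangle>\<^sup>2 / |x|\<^sup>2\<close>. For a colour class \<open>C\<close>
  of a strong colouring, the restriction \<open>z\<close> of \<open>x\<close> to \<open>C\<close> satisfies \<open>z\<^sup>T A z = 0\<close> and
  \<open>\<langle>z, x\<rangle> = |z|\<^sup>2\<close>, hence \<open>-\<mu> \<ge> (l - \<mu>) |z|\<^sup>2 / |x|\<^sup>2\<close>. Summing over the \<open>\<gamma>\<close> classes gives
  \<open>-\<gamma> \<mu> \<ge> l - \<mu>\<close>. Finally \<open>\<mu> < 0\<close>, as the test vector \<open>e\<^sub>p - e\<^sub>q\<close> for two vertices \<open>p, q\<close>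
  of an edge has \<open>(e\<^sub>p - e\<^sub>q)\<^sup>T A (e\<^sub>p - e\<^sub>q) = -2 A\<^sub>p\<^sub>q < 0\<close>.\<close>

definition bilinear_form :: "nat \<Rightarrow> (nat \<Rightarrow> nat \<Rightarrow> real) \<Rightarrow> (nat \<Rightarrow> real) \<Rightarrow> (nat \<Rightarrow> real) \<Rightarrow> real"
  where "bilinear_form n a u v = (\<Sum>i<n. \<Sum>j<n. a i j * u i * v j)"

definition norm_sq :: "nat \<Rightarrow> (nat \<Rightarrow> real) \<Rightarrow> real"
  where "norm_sq n z = (\<Sum>i<n. (z i)\<^sup>2)"

definition unit_fun :: "nat \<Rightarrow> nat \<Rightarrow> real"
  where "unit_fun k = (\<lambda>i. if i = k then 1 else 0)"

lemma unit_fun_mult [simp]: "unit_fun k i * x = (if i = k then x else 0)"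
  and mult_unit_fun [simp]: "x * unit_fun k i = (if i = k then x else 0)"
  unfolding unit_fun_def by simp_all

lemma unit_fun_self [simp]: "unit_fun k k = 1"
  unfolding unit_fun_def by simp

lemma norm_sq_nonneg: "norm_sq n z \<ge> 0"
  unfolding norm_sq_def by (simp add: sum_nonneg)

lemma norm_sq_eq_0_iff: "norm_sq n z = 0 \<longleftrightarrow> (\<forall>i<n. z i = 0)"
  unfolding norm_sq_def by (subst sum_nonneg_eq_0_iff) auto

lemma bilinear_form_add_scaled:
  "bilinear_form n a (\<lambda>i. y i + t * u i) (\<lambda>i. y i + t * u i)
     = bilinear_form n a y y + t * (bilinear_form n a y u + bilinear_form n a u y)
       + t\<^sup>2 * bilinear_form n a u u"
  unfolding bilinear_form_def
  by (simp add: algebra_simps sum.distrib sum_distrib_left power2_eq_square)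

lemma norm_sq_add_scaled:
  "norm_sq n (\<lambda>i. y i + t * u i) = norm_sq n y + 2 * t * (\<Sum>i<n. y i * u i) + t\<^sup>2 * norm_sq n u"
  unfolding norm_sq_def by (simp add: algebra_simps sum.distrib sum_distrib_left power2_eq_square)

lemma bilinear_form_commute:
  assumes "\<And>i j. i < n \<Longrightarrow> j < n \<Longrightarrow> a i j = a j i"
  shows "bilinear_form n a u v = bilinear_form n a v u"
proof -
  have "bilinear_form n a u v = (\<Sum>j<n. \<Sum>i<n. a i j * u i * v j)"
    unfolding bilinear_form_def by (rule sum.swap)
  also have "\<dots> = bilinear_form n a v u"
    unfolding bilinear_form_def by (intro sum.cong refl) (simp add: assms mult_ac)
  finally show ?thesis .
qed

lemma bilinear_form_eq_sum_mult:
  "bilinear_form n a u v = (\<Sum>i<n. u i * (\<Sum>j<n. a i j * v j))"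
  unfolding bilinear_form_def by (simp add: sum_distrib_left mult_ac)

lemma bilinear_form_eigenvector:
  assumes "\<forall>i<n. (\<Sum>j<n. a i j * x j) = l * x i"
  shows "bilinear_form n a w x = l * (\<Sum>i<n. w i * x i)"
  unfolding bilinear_form_eq_sum_mult using assms by (simp add: sum_distrib_left mult_ac)

lemma bilinear_form_unit_left:
  assumes "k < n"
  shows "bilinear_form n a (unit_fun k) v = (\<Sum>j<n. a k j * v j)"
  unfolding bilinear_form_eq_sum_mult using assms by simp

lemma bilinear_form_unit_unit:
  assumes "p < n" "q < n"
  shows "bilinear_form n a (unit_fun p) (unit_fun q) = a p q"
  unfolding bilinear_form_unit_left[OF assms(1)] using assms(2) by simp

lemma norm_sq_unit_fun: "k < n \<Longrightarrow> norm_sq n (unit_fun k) = 1"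
  unfolding norm_sq_def by (simp add: power2_eq_square)

subsection \<open>The Rayleigh quotient\<close>

lemma linear_coeff_zero_if_quadratic_nonneg:
  fixes b c :: real
  assumes "\<And>t. 2 * t * b + t\<^sup>2 * c \<ge> 0"
  shows "b = 0"
proof (rule ccontr)
  assume "b \<noteq> 0"
  define D where "D = \<bar>c\<bar> + 1"
  define t where "t = - b / D"
  have D: "D > 0" "c \<le> D" unfolding D_def by auto
  have "2 * t * b + t\<^sup>2 * c \<le> 2 * t * b + t\<^sup>2 * D"
    using D by (simp add: mult_left_mono)
  also have "\<dots> = - b\<^sup>2 / D"
    unfolding t_def using D by (simp add: field_simps power2_eq_square)
  also have "\<dots> < 0" using \<open>b \<noteq> 0\<close> D by simp
  finally show False using assms[of t] by linarith
qed

lemma compact_unit_sphere_in_cube: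
  "compact (Pi\<^sub>E UNIV (\<lambda>_::nat. {-1..1::real}) \<inter> {z. norm_sq n z = 1})"
proof (rule compact_Int_closed)
  show "compact (Pi\<^sub>E UNIV (\<lambda>_::nat. {-1..1::real}))"
    using compactin_PiE[of "\<lambda>_. euclidean" UNIV "\<lambda>_. {-1..1::real}"]
    by (simp add: euclidean_product_topology)
  have "continuous_on UNIV (\<lambda>z::nat \<Rightarrow> real. norm_sq n z)"
    unfolding norm_sq_def by (intro continuous_intros continuous_on_product_coordinates)
  then show "closed {z::nat \<Rightarrow> real. norm_sq n z = 1}"
    using closed_Collect_eq[OF _ continuous_on_const] by simp
qed

lemma rayleigh_minimizer_exists:
  assumes "n > 0"
  obtains y where "norm_sq n y = 1"
    and "\<And>z. bilinear_form n a y y * norm_sq n z \<le> bilinear_form n a z z"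
proof -
  define S where "S = Pi\<^sub>E UNIV (\<lambda>_::nat. {-1..1::real}) \<inter> {z. norm_sq n z = 1}"
  have "unit_fun 0 \<in> S"
    unfolding S_def using norm_sq_unit_fun[OF assms] by (auto simp: unit_fun_def)
  moreover have "continuous_on S (\<lambda>z. bilinear_form n a z z)"
    unfolding bilinear_form_def
    by (intro continuous_intros continuous_on_subset[OF continuous_on_product_coordinates]) auto
  ultimately obtain y where "y \<in> S" and ymin: "\<And>z. z \<in> S \<Longrightarrow> bilinear_form n a y y \<le> bilinear_form n a z z"
    using continuous_attains_inf[OF compact_unit_sphere_in_cube[of n, folded S_def]] by blast
  have "bilinear_form n a y y * norm_sq n z \<le> bilinear_form n a z z" for z
  proof (cases "norm_sq n z = 0")
    case True
    then have "\<forall>i<n. z i = 0" by (simp add: norm_sq_eq_0_iff)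
    with True show ?thesis by (simp add: bilinear_form_def)
  next
    case False
    define N where "N = norm_sq n z"
    have N: "N > 0" using False norm_sq_nonneg[of n z] unfolding N_def by linarith
    define w where "w = (\<lambda>i. if i < n then z i / sqrt N else 0)"
    have "norm_sq n w = (\<Sum>i<n. (z i)\<^sup>2 / N)"
      unfolding norm_sq_def w_def using N by (intro sum.cong) (auto simp: power_divide)
    also have "\<dots> = 1" using N unfolding N_def norm_sq_def by (simp add: sum_divide_distrib[symmetric])
    finally have w1: "norm_sq n w = 1" .
    have "(w i)\<^sup>2 \<le> 1" for i
    proof (cases "i < n")
      case True
      then have "(w i)\<^sup>2 \<le> norm_sq n w" unfolding norm_sq_def by (intro member_le_sum) auto
      with w1 show ?thesis by simp
    qed (simp add: w_def)
    then have "w \<in> S" using w1 abs_square_le_1 unfolding S_def by (auto simp: abs_le_iff)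
    then have "bilinear_form n a y y \<le> bilinear_form n a w w" by (rule ymin)
    also have "bilinear_form n a w w = bilinear_form n a z z / N"
    proof -
      have "bilinear_form n a w w = (\<Sum>i<n. \<Sum>j<n. a i j * z i * z j / (sqrt N * sqrt N))"
        unfolding bilinear_form_def w_def by (intro sum.cong refl) simp
      also have "\<dots> = bilinear_form n a z z / N"
        unfolding bilinear_form_def using N by (simp add: sum_divide_distrib)
      finally show ?thesis .
    qed
    finally show ?thesis using N unfolding N_def by (simp add: pos_le_divide_eq)
  qed
  with \<open>y \<in> S\<close> that show ?thesis unfolding S_def by blast
qed

text \<open>The first variation of \<open>z \<mapsto> z\<^sup>T A z - \<mu> |z|\<^sup>2\<close> at a minimiser vanishes.\<close>

lemma rayleigh_minimizer_is_eigenvector: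
  assumes sym: "\<And>i j. i < n \<Longrightarrow> j < n \<Longrightarrow> a i j = a j i"
    and bound: "\<And>z. \<mu> * norm_sq n z \<le> bilinear_form n a z z"
    and attained: "bilinear_form n a y y = \<mu> * norm_sq n y"
    and "k < n"
  shows "(\<Sum>j<n. a k j * y j) = \<mu> * y k"
proof -
  have ky: "bilinear_form n a (unit_fun k) y = (\<Sum>j<n. a k j * y j)"
    by (rule bilinear_form_unit_left[OF \<open>k < n\<close>])
  have yk: "bilinear_form n a y (unit_fun k) = (\<Sum>j<n. a k j * y j)"
    using bilinear_form_commute[OF sym, where u = y and v = "unit_fun k"] ky by simp
  have "2 * t * ((\<Sum>j<n. a k j * y j) - \<mu> * y k) + t\<^sup>2 * (a k k - \<mu>) \<ge> 0" for t
    using bound[of "\<lambda>i. y i + t * unit_fun k i"] attained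
    unfolding bilinear_form_add_scaled norm_sq_add_scaled ky yk
      bilinear_form_unit_unit[OF \<open>k < n\<close> \<open>k < n\<close>] norm_sq_unit_fun[OF \<open>k < n\<close>]
    using \<open>k < n\<close> by (simp add: algebra_simps)
  then show ?thesis using linear_coeff_zero_if_quadratic_nonneg by fastforce
qed

lemma rayleigh_gap:
  assumes sym: "\<And>i j. i < n \<Longrightarrow> j < n \<Longrightarrow> a i j = a j i"
    and bound: "\<And>z. \<mu> * norm_sq n z \<le> bilinear_form n a z z"
    and eig: "\<forall>i<n. (\<Sum>j<n. a i j * x j) = l * x i"
    and x: "norm_sq n x > 0"
  shows "(l - \<mu>) * (\<Sum>i<n. z i * x i)\<^sup>2 / norm_sq n x \<le> bilinear_form n a z z - \<mu> * norm_sq n z"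
proof -
  define X where "X = norm_sq n x"
  define s where "s = (\<Sum>i<n. z i * x i)"
  define t where "t = s / X"
  define w where "w = (\<lambda>i. z i - t * x i)"
  have z: "z = (\<lambda>i. w i + t * x i)" unfolding w_def by simp
  have "(\<Sum>i<n. w i * x i) = s - t * X"
    unfolding w_def s_def X_def norm_sq_def
    by (simp add: algebra_simps sum_subtractf sum_distrib_left power2_eq_square)
  then have wx: "(\<Sum>i<n. w i * x i) = 0" unfolding t_def using x X_def by simp
  have q1: "bilinear_form n a w x = 0" using bilinear_form_eigenvector[OF eig] wx by simp
  have q2: "bilinear_form n a x w = 0" using q1 bilinear_form_commute[OF sym, where u = x and v = w] by simp
  have q3: "bilinear_form n a x x = l * X"
    using bilinear_form_eigenvector[OF eig] unfolding X_def norm_sq_def by (simp add: power2_eq_square)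
  have "bilinear_form n a z z - \<mu> * norm_sq n z
      = (bilinear_form n a w w - \<mu> * norm_sq n w) + t\<^sup>2 * X * (l - \<mu>)"
    unfolding z bilinear_form_add_scaled norm_sq_add_scaled q1 q2 q3 wx X_def[symmetric]
    by (simp add: algebra_simps)
  moreover have "t\<^sup>2 * X * (l - \<mu>) = (l - \<mu>) * s\<^sup>2 / X"
    unfolding t_def using x X_def by (simp add: power2_eq_square field_simps)
  ultimately show ?thesis using bound[of w] unfolding s_def X_def by linarith
qed

subsection \<open>Eigenvalues of symmetric real matrices\<close>

lemma eigenvalue_iff_eigenfunction:
  fixes A :: "real mat"
  assumes A: "A \<in> carrier_mat n n"
  shows "eigenvalue A k
    \<longleftrightarrow> (\<exists>x. norm_sq n x > 0 \<and> (\<forall>i<n. (\<Sum>j<n. A $$ (i, j) * x j) = k * x i))"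
proof -
  have mult_vec: "(A *\<^sub>v v) $ i = (\<Sum>j<n. A $$ (i, j) * v $ j)" if "v \<in> carrier_vec n" "i < n" for v i
    using A that by (simp add: scalar_prod_def lessThan_atLeast0)
  show ?thesis
  proof
    assume "eigenvalue A k"
    then obtain v where v: "v \<in> carrier_vec n" "v \<noteq> 0\<^sub>v n" "A *\<^sub>v v = k \<cdot>\<^sub>v v"
      using A unfolding eigenvalue_def eigenvector_def by auto
    have "\<not> (\<forall>i<n. v $ i = 0)"
      using v by (metis carrier_vecD eq_vecI index_zero_vec)
    then have "norm_sq n (\<lambda>i. v $ i) > 0"
      using norm_sq_nonneg norm_sq_eq_0_iff by (metis order_less_le)
    moreover have "(\<Sum>j<n. A $$ (i, j) * v $ j) = k * v $ i" if "i < n" for i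
      using v that by (metis mult_vec index_smult_vec carrier_vecD)
    ultimately show "\<exists>x. norm_sq n x > 0 \<and> (\<forall>i<n. (\<Sum>j<n. A $$ (i, j) * x j) = k * x i)"
      by blast
  next
    assume "\<exists>x. norm_sq n x > 0 \<and> (\<forall>i<n. (\<Sum>j<n. A $$ (i, j) * x j) = k * x i)"
    then obtain x where x: "norm_sq n x > 0" "\<forall>i<n. (\<Sum>j<n. A $$ (i, j) * x j) = k * x i"
      by blast
    define v where "v = vec n x"
    have "v \<in> carrier_vec n" unfolding v_def by simp
    moreover have "v \<noteq> 0\<^sub>v n"
      using x(1) norm_sq_eq_0_iff unfolding v_def by (metis index_vec index_zero_vec(1) less_irrefl)
    moreover have "A *\<^sub>v v = k \<cdot>\<^sub>v v"
      using A x(2) mult_vec[OF \<open>v \<in> carrier_vec n\<close>] unfolding v_def by (intro eq_vecI) auto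
    ultimately show "eigenvalue A k" using A unfolding eigenvalue_def eigenvector_def by auto
  qed
qed

lemma symmetric_least_eigenvalue:
  fixes A :: "real mat"
  assumes A: "A \<in> carrier_mat n n" and "n > 0"
    and sym: "\<And>i j. i < n \<Longrightarrow> j < n \<Longrightarrow> A $$ (i, j) = A $$ (j, i)"
  obtains \<mu> where "eigenvalue A \<mu>" and "\<And>k. eigenvalue A k \<Longrightarrow> \<mu> \<le> k"
    and "\<And>z. \<mu> * norm_sq n z \<le> bilinear_form n (\<lambda>i j. A $$ (i, j)) z z"
proof -
  let ?a = "\<lambda>i j. A $$ (i, j)"
  obtain y where y: "norm_sq n y = 1"
    and bound: "\<And>z. bilinear_form n ?a y y * norm_sq n z \<le> bilinear_form n ?a z z"
    using rayleigh_minimizer_exists[OF \<open>n > 0\<close>] by blast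
  define \<mu> where "\<mu> = bilinear_form n ?a y y"
  have "\<forall>i<n. (\<Sum>j<n. ?a i j * y j) = \<mu> * y i"
    using rayleigh_minimizer_is_eigenvector[OF sym bound[folded \<mu>_def]] y unfolding \<mu>_def by simp
  with y have "eigenvalue A \<mu>"
    unfolding eigenvalue_iff_eigenfunction[OF A] by (intro exI[of _ y]) simp
  moreover have "\<mu> \<le> k" if "eigenvalue A k" for k
  proof -
    obtain x where x: "norm_sq n x > 0" "\<forall>i<n. (\<Sum>j<n. ?a i j * x j) = k * x i"
      using \<open>eigenvalue A k\<close> unfolding eigenvalue_iff_eigenfunction[OF A] by blast
    have "bilinear_form n ?a x x = k * norm_sq n x"
      using bilinear_form_eigenvector[OF x(2)] unfolding norm_sq_def by (simp add: power2_eq_square)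
    with bound[of x] x(1) show ?thesis unfolding \<mu>_def by simp
  qed
  ultimately show ?thesis using that bound unfolding \<mu>_def by blast
qed

lemma symmetric_lambda_min_lambda_max:
  fixes A :: "real mat"
  assumes A: "A \<in> carrier_mat n n" and "n > 0"
    and sym: "\<And>i j. i < n \<Longrightarrow> j < n \<Longrightarrow> A $$ (i, j) = A $$ (j, i)"
  shows "lambda_min A * norm_sq n z \<le> bilinear_form n (\<lambda>i j. A $$ (i, j)) z z"
    and "eigenvalue A (lambda_max A)"
proof -
  obtain \<mu> where \<mu>: "eigenvalue A \<mu>" "\<And>k. eigenvalue A k \<Longrightarrow> \<mu> \<le> k"
    and bound: "\<And>z. \<mu> * norm_sq n z \<le> bilinear_form n (\<lambda>i j. A $$ (i, j)) z z"
    using symmetric_least_eigenvalue[OF assms] by blast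
  have fin: "finite {k. eigenvalue A k}"
    using card_finite_spectrum(1)[OF A] unfolding spectrum_def by simp
  have "lambda_min A = \<mu>"
    unfolding lambda_min_def using fin \<mu> by (intro Min_eqI) auto
  with bound show "lambda_min A * norm_sq n z \<le> bilinear_form n (\<lambda>i j. A $$ (i, j)) z z"
    by simp
  show "eigenvalue A (lambda_max A)"
    unfolding lambda_max_def using fin \<mu>(1) Max_in[of "{k. eigenvalue A k}"] by auto
qed

lemma rayleigh_lower_bound_negative:
  assumes bound: "\<And>z. \<mu> * norm_sq n z \<le> bilinear_form n a z z"
    and "p < n" "q < n" "p \<noteq> q"
    and "a p p = 0" "a q q = 0" "a q p = a p q" "a p q > 0"
  shows "\<mu> < 0"
proof -
  define z where "z = (\<lambda>i. unit_fun p i + (-1) * unit_fun q i)"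
  have "bilinear_form n a z z = - 2 * a p q"
    unfolding z_def bilinear_form_add_scaled using assms(2-7)
    by (simp add: bilinear_form_unit_unit)
  moreover have "(\<Sum>i<n. unit_fun p i * unit_fun q i) = 0"
    using \<open>p \<noteq> q\<close> by (simp add: unit_fun_def)
  then have "norm_sq n z = 2"
    unfolding z_def norm_sq_add_scaled using assms(2,3) by (simp add: norm_sq_unit_fun)
  ultimately show ?thesis using bound[of z] \<open>a p q > 0\<close> by simp
qed

subsection \<open>Hoffman's bound\<close>

lemma hoffman_bound:
  assumes sym: "\<And>i j. i < n \<Longrightarrow> j < n \<Longrightarrow> a i j = a j i"
    and bound: "\<And>z. \<mu> * norm_sq n z \<le> bilinear_form n a z z"
    and eig: "\<forall>i<n. (\<Sum>j<n. a i j * x j) = l * x i"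
    and x: "norm_sq n x > 0"
    and "\<mu> < 0"
    and colours: "\<And>i. i < n \<Longrightarrow> c i < k"
    and independent: "\<And>i j. i < n \<Longrightarrow> j < n \<Longrightarrow> c i = c j \<Longrightarrow> a i j = 0"
  shows "l - \<mu> \<le> - real k * \<mu>"
proof -
  define z where "z = (\<lambda>r i. if c i = r then x i else 0)"
  have class_bound: "(l - \<mu>) * norm_sq n (z r) / norm_sq n x \<le> - \<mu>" for r
  proof -
    have "bilinear_form n a (z r) (z r) = 0"
      unfolding bilinear_form_def z_def by (intro sum.neutral ballI) (auto simp: independent)
    moreover have "(\<Sum>i<n. z r i * x i) = norm_sq n (z r)"
      unfolding norm_sq_def z_def by (intro sum.cong refl) (auto simp: power2_eq_square)
    ultimately have "(l - \<mu>) * (norm_sq n (z r))\<^sup>2 / norm_sq n x \<le> - \<mu> * norm_sq n (z r)"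
      using rayleigh_gap[OF sym bound eig x, of "z r"] by simp
    then have "((l - \<mu>) * norm_sq n (z r) / norm_sq n x) * norm_sq n (z r) \<le> - \<mu> * norm_sq n (z r)"
      by (simp add: power2_eq_square)
    moreover have "norm_sq n (z r) = 0 \<or> norm_sq n (z r) > 0"
      using norm_sq_nonneg[of n "z r"] by linarith
    ultimately show ?thesis using \<open>\<mu> < 0\<close> mult_le_cancel_right_pos by fastforce
  qed
  have "(\<Sum>r<k. norm_sq n (z r)) = (\<Sum>i<n. \<Sum>r<k. if c i = r then (x i)\<^sup>2 else 0)"
    unfolding norm_sq_def z_def by (subst sum.swap) (intro sum.cong refl, auto)
  also have "\<dots> = norm_sq n x" unfolding norm_sq_def using colours by simp
  finally have "l - \<mu> = (\<Sum>r<k. (l - \<mu>) * norm_sq n (z r) / norm_sq n x)"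
    using x by (simp add: sum_divide_distrib[symmetric] sum_distrib_left[symmetric])
  also have "\<dots> \<le> (\<Sum>r<k. - \<mu>)" by (intro sum_mono class_bound)
  finally show ?thesis by simp
qed

lemma hg_adj_matrix_entry:
  "i < n \<Longrightarrow> j < n \<Longrightarrow> hg_adj_matrix n E $$ (i, j) = (if i = j then 0
      else (\<Sum>e\<in>{e\<in>E. i \<in> e \<and> j \<in> e}. 1 / (real (card e) - 1)))"
  unfolding hg_adj_matrix_def by simp

lemma hg_adj_matrix_symmetric:
  assumes "i < n" "j < n"
  shows "hg_adj_matrix n E $$ (i, j) = hg_adj_matrix n E $$ (j, i)"
proof -
  have "{e\<in>E. i \<in> e \<and> j \<in> e} = {e\<in>E. j \<in> e \<and> i \<in> e}" by blast
  then show "hg_adj_matrix n E $$ (i, j) = hg_adj_matrix n E $$ (j, i)"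
    using assms by (simp add: hg_adj_matrix_entry)
qed

lemma hg_adj_matrix_zero_if_not_adjacent:
  assumes "i < n" "j < n" "\<not> hg_adjacent E i j"
  shows "hg_adj_matrix n E $$ (i, j) = 0"
proof (cases "i = j")
  case False
  then have "{e\<in>E. i \<in> e \<and> j \<in> e} = {}"
    using assms(3) unfolding hg_adjacent_def by blast
  with False show ?thesis by (simp only: hg_adj_matrix_entry[OF assms(1,2)] if_False sum.empty)
qed (simp add: hg_adj_matrix_entry assms)

lemma hg_adj_matrix_pos:
  assumes "hypergraph n E" "e \<in> E" "p \<in> e" "q \<in> e" "p \<noteq> q"
  shows "hg_adj_matrix n E $$ (p, q) > 0"
proof -
  have edges: "e' \<subseteq> {..<n} \<and> 2 \<le> card e'" if "e' \<in> E" for e'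
    using assms(1) that unfolding hypergraph_def by blast
  have "finite E" by (rule finite_subset[of E "Pow {..<n}"]) (use edges in auto)
  have "p < n" "q < n" using edges[OF assms(2)] assms(3,4) by auto
  moreover have "(\<Sum>e'\<in>{e'\<in>E. p \<in> e' \<and> q \<in> e'}. 1 / (real (card e') - 1)) > 0"
  proof (rule sum_pos)
    show "finite {e'\<in>E. p \<in> e' \<and> q \<in> e'}" using \<open>finite E\<close> by simp
    show "{e'\<in>E. p \<in> e' \<and> q \<in> e'} \<noteq> {}" using assms(2-4) by auto
  qed (use edges in force)
  ultimately show ?thesis using assms(5) by (simp add: hg_adj_matrix_entry)
qed

lemma hypergraph_edge_has_two_vertices:
  assumes "hypergraph n E" "e \<in> E"
  obtains p q where "p \<in> e" "q \<in> e" "p \<noteq> q" "p < n" "q < n"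
proof -
  have e: "e \<subseteq> {..<n}" "2 \<le> card e" using assms unfolding hypergraph_def by auto
  then have "finite e" using finite_subset by blast
  with e(2) obtain p q where "p \<in> e" "q \<in> e" "p \<noteq> q"
    using card_le_Suc0_iff_eq[of e] by fastforce
  with e(1) that show ?thesis by auto
qed

lemma optimal_colouring_classes_independent:
  obtains c where "\<And>i. i < n \<Longrightarrow> c i < strong_chromatic_number n E"
    and "\<And>i j. i < n \<Longrightarrow> j < n \<Longrightarrow> c i = c j \<Longrightarrow> hg_adj_matrix n E $$ (i, j) = 0"
proof -
  have "\<exists>k. \<exists>c :: nat \<Rightarrow> nat.
      (\<forall>i<n. c i < k) \<and> (\<forall>i<n. \<forall>j<n. hg_adjacent E i j \<longrightarrow> c i \<noteq> c j)"
    by (intro exI[of _ n] exI[of _ id]) (auto simp: hg_adjacent_def)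
  from LeastI_ex[OF this] obtain c :: "nat \<Rightarrow> nat"
    where "\<forall>i<n. c i < strong_chromatic_number n E"
      and "\<forall>i<n. \<forall>j<n. hg_adjacent E i j \<longrightarrow> c i \<noteq> c j"
    unfolding strong_chromatic_number_def by blast
  with that show ?thesis using hg_adj_matrix_zero_if_not_adjacent by metis
qed

lemma hg_adj_matrix_lambda_min_neg:
  assumes "hypergraph n E" "e \<in> E" "p \<in> e" "q \<in> e" "p \<noteq> q"
  shows "lambda_min (hg_adj_matrix n E) < 0"
proof -
  let ?A = "hg_adj_matrix n E"
  have "p < n" "q < n" using assms(1-4) unfolding hypergraph_def by auto
  have "?A \<in> carrier_mat n n" unfolding hg_adj_matrix_def by simp
  then have bound: "lambda_min ?A * norm_sq n z \<le> bilinear_form n (\<lambda>i j. ?A $$ (i, j)) z z" for z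
    using \<open>p < n\<close> hg_adj_matrix_symmetric by (intro symmetric_lambda_min_lambda_max) auto
  have "?A $$ (p, p) = 0" "?A $$ (q, q) = 0"
    using \<open>p < n\<close> \<open>q < n\<close> by (simp_all add: hg_adj_matrix_entry)
  from rayleigh_lower_bound_negative[OF bound \<open>p < n\<close> \<open>q < n\<close> \<open>p \<noteq> q\<close> this
      hg_adj_matrix_symmetric[OF \<open>q < n\<close> \<open>p < n\<close>] hg_adj_matrix_pos[OF assms]]
  show ?thesis .
qed

theorem theorem4:
  fixes n :: nat and E :: "nat set set"
  assumes "hypergraph n E" and "E \<noteq> {}"
  shows "real (strong_chromatic_number n E)
           \<ge> 1 - lambda_max (hg_adj_matrix n E) / lambda_min (hg_adj_matrix n E)"
proof -
  let ?A = "hg_adj_matrix n E"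
  obtain e where "e \<in> E" using \<open>E \<noteq> {}\<close> by blast
  then obtain p q where pq: "p \<in> e" "q \<in> e" "p \<noteq> q" "p < n"
    using hypergraph_edge_has_two_vertices[OF \<open>hypergraph n E\<close>] by blast
  have neg: "lambda_min ?A < 0"
    using hg_adj_matrix_lambda_min_neg[OF \<open>hypergraph n E\<close> \<open>e \<in> E\<close> pq(1-3)] .
  have A: "?A \<in> carrier_mat n n" and "n > 0" using pq unfolding hg_adj_matrix_def by auto
  have sym: "\<And>i j. i < n \<Longrightarrow> j < n \<Longrightarrow> ?A $$ (i, j) = ?A $$ (j, i)"
    by (rule hg_adj_matrix_symmetric)
  have bound: "lambda_min ?A * norm_sq n z \<le> bilinear_form n (\<lambda>i j. ?A $$ (i, j)) z z" for z
    using A \<open>n > 0\<close> sym by (rule symmetric_lambda_min_lambda_max)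
  have "eigenvalue ?A (lambda_max ?A)"
    using A \<open>n > 0\<close> sym by (rule symmetric_lambda_min_lambda_max)
  then obtain x where x: "norm_sq n x > 0"
    "\<forall>i<n. (\<Sum>j<n. ?A $$ (i, j) * x j) = lambda_max ?A * x i"
    unfolding eigenvalue_iff_eigenfunction[OF A] by blast
  obtain c where "\<And>i. i < n \<Longrightarrow> c i < strong_chromatic_number n E"
    and "\<And>i j. i < n \<Longrightarrow> j < n \<Longrightarrow> c i = c j \<Longrightarrow> ?A $$ (i, j) = 0"
    using optimal_colouring_classes_independent[where n = n and E = E] by blast
  with sym bound x(2,1) neg
  have "lambda_max ?A - lambda_min ?A \<le> - real (strong_chromatic_number n E) * lambda_min ?A"
    by (rule hoffman_bound)
  with neg have "1 - real (strong_chromatic_number n E) \<le> lambda_max ?A / lambda_min ?A"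
    by (simp add: le_divide_eq algebra_simps)
  then show ?thesis by simp
qed

end
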